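(* Let $n\ge 3$, let $t$ be an indeterminate, and let $\rho'_S: SB_n\to GL_n(\mathbb{Z}[t^{\pm1}])$ be any representation extending the standard representation $\rho_S: B_n\to GL_n(\mathbb{Z}[t^{\pm1}])$ (equivalently, by the classification of such extensions, one given for some $a,c\in\mathbb{Z}[t^{\pm1}]$ by $\rho'_S(\sigma_i)=\mathrm{diag}(I_{i-1},\begin{pmatrix}0&t\\1&0\end{pmatrix},I_{n-i-1})$ and $\rho'_S(\tau_i)=\mathrm{diag}(I_{i-1},\begin{pmatrix}a&ct\\c&a\end{pmatrix},I_{n-i-1})$). Then $\rho'_S$ is not faithful.
   Context: $I_r$ is the $r\times r$ identity matrix. $B_n$ is the braid group with generators $\sigma_1,\dots,\sigma_{n-1}$ and relations $\sigma_i\sigma_{i+1}\sigma_i=\sigma_{i+1}\sigma_i\sigma_{i+1}$, $\sigma_i\sigma_j=\sigma_j\sigma_i$ ($|i-j|\ge2$). The singular braid group $SB_n\supset B_n$ is generated by $\sigma_1,\dots,\sigma_{n-1},\tau_1,\dots,\tau_{n-1}$ subject to the braid relations together with $\tau_i\tau_j=\tau_j\tau_i$, $\tau_i\sigma_j=\sigma_j\tau_i$ ($|i-j|\ge2$), $\tau_i\sigma_i=\sigma_i\tau_i$, $\sigma_i\sigma_{i+1}\tau_i=\tau_{i+1}\sigma_i\sigma_{i+1}$, $\sigma_{i+1}\sigma_i\tau_{i+1}=\tau_i\sigma_{i+1}\sigma_i$. The standard representation $\rho_S$ sends $\sigma_i$ to $\mathrm{diag}(I_{i-1},\begin{pmatrix}0&t\\1&0\end{pmatrix},I_{n-i-1})$.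 *)

theory Defs
  imports "HOL-Computational_Algebra.Polynomial" "HOL-Computational_Algebra.Fraction_Field"
          "Jordan_Normal_Form.Matrix"
begin

text \<open>Coefficient field: rational functions over the integers; the Laurent
polynomial ring Z[t, t^-1] is the subring laurent_ring.\<close>

type_synonym ratfun = "int poly fract"

definition tt :: ratfun where "tt = Fract [:0, 1:] 1"

definition laurent_ring :: "ratfun set" where
  "laurent_ring = {Fract p ([:0, 1:] ^ k) | p k. True}"

text \<open>Generators of SB_n (1-based indices), letters = generator + inversion flag.\<close>
datatype gen = Sig nat | Tau nat

type_synonym letter = "gen \<times> bool"

fun gidx :: "gen \<Rightarrow> nat" where
  "gidx (Sig i) = i" | "gidx (Tau i) = i"

definition valid_word :: "nat \<Rightarrow> letter list \<Rightarrow> bool" where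
  "valid_word n w \<longleftrightarrow> (\<forall>x\<in>set w. 1 \<le> gidx (fst x) \<and> gidx (fst x) \<le> n - 1)"

abbreviation "s i \<equiv> (Sig i, False)"
abbreviation "ta i \<equiv> (Tau i, False)"

inductive sb_rel :: "nat \<Rightarrow> letter list \<Rightarrow> letter list \<Rightarrow> bool" for n where
  cancel: "1 \<le> gidx g \<Longrightarrow> gidx g \<le> n - 1 \<Longrightarrow> sb_rel n [(g, b), (g, \<not> b)] []"
| braid3: "1 \<le> i \<Longrightarrow> i + 1 \<le> n - 1 \<Longrightarrow> sb_rel n [s i, s (i+1), s i] [s (i+1), s i, s (i+1)]"
| ss_comm: "1 \<le> i \<Longrightarrow> i \<le> n - 1 \<Longrightarrow> 1 \<le> j \<Longrightarrow> j \<le> n - 1 \<Longrightarrow> i + 2 \<le> j \<or> j + 2 \<le> i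
     \<Longrightarrow> sb_rel n [s i, s j] [s j, s i]"
| tt_comm: "1 \<le> i \<Longrightarrow> i \<le> n - 1 \<Longrightarrow> 1 \<le> j \<Longrightarrow> j \<le> n - 1 \<Longrightarrow> i + 2 \<le> j \<or> j + 2 \<le> i
     \<Longrightarrow> sb_rel n [ta i, ta j] [ta j, ta i]"
| ts_comm: "1 \<le> i \<Longrightarrow> i \<le> n - 1 \<Longrightarrow> 1 \<le> j \<Longrightarrow> j \<le> n - 1 \<Longrightarrow> i + 2 \<le> j \<or> j + 2 \<le> i
     \<Longrightarrow> sb_rel n [ta i, s j] [s j, ta i]"
| ts_same: "1 \<le> i \<Longrightarrow> i \<le> n - 1 \<Longrightarrow> sb_rel n [ta i, s i] [s i, ta i]"
| mixed1: "1 \<le> i \<Longrightarrow> i + 1 \<le> n - 1 \<Longrightarrow> sb_rel n [s i, s (i+1), ta i] [ta (i+1), s i, s (i+1)]"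
| mixed2: "1 \<le> i \<Longrightarrow> i + 1 \<le> n - 1 \<Longrightarrow> sb_rel n [s (i+1), s i, ta (i+1)] [ta i, s (i+1), s i]"

inductive sb_eq :: "nat \<Rightarrow> letter list \<Rightarrow> letter list \<Rightarrow> bool" for n where
  step: "sb_rel n l r \<Longrightarrow> sb_eq n (u @ l @ v) (u @ r @ v)"
| refl: "sb_eq n w w"
| sym: "sb_eq n u v \<Longrightarrow> sb_eq n v u"
| trans: "sb_eq n u v \<Longrightarrow> sb_eq n v w \<Longrightarrow> sb_eq n u w"

text \<open>Standard representation matrix of sigma_i (1-based i; 0-based rows i-1, i).\<close>
definition std_sigma :: "nat \<Rightarrow> nat \<Rightarrow> ratfun mat" where
  "std_sigma n i = mat n n (\<lambda>(r, c).
      if r = i - 1 \<and> c = i - 1 then 0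
      else if r = i - 1 \<and> c = i then tt
      else if r = i \<and> c = i - 1 then 1
      else if r = i \<and> c = i then 0
      else if r = c then 1 else 0)"

definition in_GL_laurent :: "nat \<Rightarrow> ratfun mat \<Rightarrow> ratfun mat \<Rightarrow> bool" where
  "in_GL_laurent n A B \<longleftrightarrow> A \<in> carrier_mat n n \<and> B \<in> carrier_mat n n \<and>
     A * B = 1\<^sub>m n \<and> B * A = 1\<^sub>m n \<and>
     (\<forall>r<n. \<forall>c<n. A $$ (r, c) \<in> laurent_ring \<and> B $$ (r, c) \<in> laurent_ring)"

definition word_mat :: "nat \<Rightarrow> (gen \<Rightarrow> ratfun mat) \<Rightarrow> (gen \<Rightarrow> ratfun mat) \<Rightarrow> letter list \<Rightarrow> ratfun mat" where
  "word_mat n rho rhoinv w = foldr (\<lambda>(g, b) M. (if b then rhoinv g else rho g) * M) w (1\<^sub>m n)"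

end

theory Submission
  imports Defs "HOL-Combinatorics.Transposition"
begin

text \<open>The standard representation sends every \<open>\<sigma>\<^sub>i\<close> to a monomial matrix whose
permutation part is a transposition, so it sends \<open>\<sigma>\<^sub>i\<^sup>2\<close> to a diagonal matrix. Hence
\<open>\<sigma>\<^sub>1\<^sup>2\<sigma>\<^sub>2\<^sup>2\<close> and \<open>\<sigma>\<^sub>2\<^sup>2\<sigma>\<^sub>1\<^sup>2\<close> have the same image under any extension \<open>\<rho>'\<^sub>S\<close>.
They are nevertheless different elements of \<open>SB\<^sub>n\<close>: the Burau representation at
\<open>t = -1\<close>, extended by letting every \<open>\<tau>\<^sub>i\<close> act trivially, respects the defining
relations and tells the two words apart.\<close>

fun burau_letter :: "letter \<Rightarrow> (nat \<Rightarrow> int) \<Rightarrow> nat \<Rightarrow> int" where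
  "burau_letter (Sig i, False) f = f(i := 2 * f i - f (Suc i), Suc i := f i)"
| "burau_letter (Sig i, True) f = f(i := f (Suc i), Suc i := 2 * f (Suc i) - f i)"
| "burau_letter (Tau i, b) f = f"

definition burau_word :: "letter list \<Rightarrow> (nat \<Rightarrow> int) \<Rightarrow> nat \<Rightarrow> int" where
  "burau_word w = foldr (\<lambda>x F. burau_letter x \<circ> F) w id"

lemma burau_word_append: "burau_word (u @ v) = burau_word u \<circ> burau_word v"
  by (induction u) (auto simp: burau_word_def)

lemma burau_word_sb_rel: "sb_rel n l r \<Longrightarrow> burau_word l = burau_word r"
proof (induction rule: sb_rel.induct)
  case (cancel g b)
  show ?case by (cases g; cases b) (auto simp: burau_word_def fun_eq_iff)
qed (auto simp: burau_word_def fun_eq_iff)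

lemma burau_word_sb_eq: "sb_eq n u v \<Longrightarrow> burau_word u = burau_word v"
  by (induction rule: sb_eq.induct) (auto simp: burau_word_append dest: burau_word_sb_rel)

lemma not_sb_eq_sigma_squares: "\<not> sb_eq n [s 1, s 1, s 2, s 2] [s 2, s 2, s 1, s 1]"
proof
  let ?e3 = "\<lambda>k. if k = 3 then 1 else 0"
  assume "sb_eq n [s 1, s 1, s 2, s 2] [s 2, s 2, s 1, s 1]"
  then have "burau_word [s 1, s 1, s 2, s 2] ?e3 1 = burau_word [s 2, s 2, s 1, s 1] ?e3 1"
    by (simp add: burau_word_sb_eq)
  then show False by (simp add: burau_word_def numeral_eq_Suc)
qed

definition monomial_mat :: "nat \<Rightarrow> (nat \<Rightarrow> nat) \<Rightarrow> (nat \<Rightarrow> 'a::zero) \<Rightarrow> 'a mat" where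
  "monomial_mat n p w = mat n n (\<lambda>(r, c). if c = p r then w r else 0)"

lemma monomial_mat_cong:
  "(\<And>r. r < n \<Longrightarrow> p r = q r \<and> w r = v r) \<Longrightarrow> monomial_mat n p w = monomial_mat n q v"
  by (auto simp: monomial_mat_def)

lemma monomial_mat_mult:
  fixes w v :: "nat \<Rightarrow> 'a::semiring_0"
  assumes p: "\<And>r. r < n \<Longrightarrow> p r < n"
  shows "monomial_mat n p w * monomial_mat n q v = monomial_mat n (q \<circ> p) (\<lambda>r. w r * v (p r))"
proof (rule eq_matI)
  fix r c assume "r < dim_row (monomial_mat n (q \<circ> p) (\<lambda>r. w r * v (p r)))"
    "c < dim_col (monomial_mat n (q \<circ> p) (\<lambda>r. w r * v (p r)))"
  then have rc: "r < n" "c < n" by (auto simp: monomial_mat_def)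
  have "(monomial_mat n p w * monomial_mat n q v) $$ (r, c)
      = (\<Sum>k\<in>{0..<n}. (if k = p r then w r else 0) * monomial_mat n q v $$ (k, c))"
    using rc by (simp add: monomial_mat_def scalar_prod_def)
  also have "\<dots> = w r * monomial_mat n q v $$ (p r, c)"
    using p rc by (simp add: if_distrib[of "\<lambda>x. x * _"] cong: if_cong)
  also have "\<dots> = monomial_mat n (q \<circ> p) (\<lambda>r. w r * v (p r)) $$ (r, c)"
    using p rc by (simp add: monomial_mat_def)
  finally show "(monomial_mat n p w * monomial_mat n q v) $$ (r, c)
      = monomial_mat n (q \<circ> p) (\<lambda>r. w r * v (p r)) $$ (r, c)" .
qed (auto simp: monomial_mat_def)

lemma diagonal_monomial_mats_commute:
  fixes a b :: "nat \<Rightarrow> 'a::comm_semiring_0"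
  shows "monomial_mat n id a * monomial_mat n id b = monomial_mat n id b * monomial_mat n id a"
  by (simp add: monomial_mat_mult mult.commute)

lemma std_sigma_monomial:
  assumes "1 \<le> i" "i < n"
  shows "std_sigma n i = monomial_mat n (transpose (i - 1) i) (\<lambda>r. if r = i - 1 then tt else 1)"
    (is "_ = ?M")
proof (rule eq_matI)
  fix r c assume "r < dim_row ?M" "c < dim_col ?M"
  then have "r < n" "c < n" by (simp_all add: monomial_mat_def)
  then show "std_sigma n i $$ (r, c) = ?M $$ (r, c)"
    using assms by (cases "r = i - 1"; cases "r = i") (auto simp: std_sigma_def monomial_mat_def)
qed (simp_all add: std_sigma_def monomial_mat_def)

lemma std_sigma_square:
  assumes "1 \<le> i" "i < n"
  shows "std_sigma n i * std_sigma n i = monomial_mat n id (\<lambda>r. if r = i - 1 \<or> r = i then tt else 1)"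
proof -
  have "\<And>r. r < n \<Longrightarrow> transpose (i - 1) i r < n"
    using assms by (auto simp: transpose_def)
  then have "std_sigma n i * std_sigma n i = monomial_mat n (transpose (i - 1) i \<circ> transpose (i - 1) i)
      (\<lambda>r. (if r = i - 1 then tt else 1) * (if transpose (i - 1) i r = i - 1 then tt else 1))"
    using assms by (simp add: std_sigma_monomial monomial_mat_mult)
  also have "\<dots> = monomial_mat n id (\<lambda>r. if r = i - 1 \<or> r = i then tt else 1)"
    using assms by (intro monomial_mat_cong) (auto simp: transpose_def)
  finally show ?thesis .
qed

lemma std_sigma_squares_commute:
  assumes "1 \<le> i" "i < n" "1 \<le> j" "j < n"
  shows "(std_sigma n i * std_sigma n i) * (std_sigma n j * std_sigma n j)
       = (std_sigma n j * std_sigma n j) * (std_sigma n i * std_sigma n i)"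
  using assms by (simp add: std_sigma_square diagonal_monomial_mats_commute)

lemma std_sigma_carrier: "std_sigma n i \<in> carrier_mat n n"
  by (simp add: std_sigma_def)

lemma word_mat_sigma_squares:
  assumes "rho (Sig i) = std_sigma n i" "rho (Sig j) = std_sigma n j"
  shows "word_mat n rho rhoinv [s i, s i, s j, s j]
       = (std_sigma n i * std_sigma n i) * (std_sigma n j * std_sigma n j)"
proof -
  have "word_mat n rho rhoinv [s i, s i, s j, s j]
      = std_sigma n i * (std_sigma n i * (std_sigma n j * std_sigma n j))"
    using assms by (simp add: word_mat_def right_mult_one_mat[OF std_sigma_carrier] del: One_nat_def)
  also have "\<dots> = (std_sigma n i * std_sigma n i) * (std_sigma n j * std_sigma n j)"
    by (metis assoc_mult_mat mult_carrier_mat std_sigma_carrier)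
  finally show ?thesis .
qed

theorem theorem4p4:
  fixes n :: nat and rho rhoinv :: "gen \<Rightarrow> ratfun mat"
  assumes "n \<ge> 3"
    and GL: "\<And>g. 1 \<le> gidx g \<Longrightarrow> gidx g \<le> n - 1 \<Longrightarrow> in_GL_laurent n (rho g) (rhoinv g)"
    and std: "\<And>i. 1 \<le> i \<Longrightarrow> i \<le> n - 1 \<Longrightarrow> rho (Sig i) = std_sigma n i"
    and hom: "\<And>l r. sb_rel n l r \<Longrightarrow> word_mat n rho rhoinv l = word_mat n rho rhoinv r"
  shows "\<exists>u v. valid_word n u \<and> valid_word n v \<and> \<not> sb_eq n u v \<and>
           word_mat n rho rhoinv u = word_mat n rho rhoinv v"
proof (intro exI conjI)
  let ?u = "[s 1, s 1, s 2, s 2]" and ?v = "[s 2, s 2, s 1, s 1]"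
  have \<sigma>\<^sub>1: "rho (Sig 1) = std_sigma n 1" and \<sigma>\<^sub>2: "rho (Sig 2) = std_sigma n 2"
    using \<open>n \<ge> 3\<close> std by simp_all
  show "valid_word n ?u" "valid_word n ?v"
    using \<open>n \<ge> 3\<close> by (auto simp: valid_word_def)
  show "\<not> sb_eq n ?u ?v"
    by (rule not_sb_eq_sigma_squares)
  show "word_mat n rho rhoinv ?u = word_mat n rho rhoinv ?v"
    unfolding word_mat_sigma_squares[OF \<sigma>\<^sub>1 \<sigma>\<^sub>2] word_mat_sigma_squares[OF \<sigma>\<^sub>2 \<sigma>\<^sub>1]
    using \<open>n \<ge> 3\<close> by (intro std_sigma_squares_commute) auto
qed

end
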